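(* Let $(I,\preceq)$ be a finite poset with $|I|=n$. For each $i\in I$ let $G_i$ be a finite group with a symmetric generating set $S_i$, $1_{G_i}\notin S_i$, and let $\mathcal{G}_i=Cay(G_i,S_i)$. For $i\in I$ put $A(i)=\{j\in I: j\succ i\}$ and $F_i=\{\phi:\prod_{j\in A(i)}G_j\to G_i\}$ (if $A(i)=\emptyset$, $F_i$ is identified with $G_i$), and let $G=\prod_{i\in I}F_i$ be the generalized wreath product of the groups $G_i$ (defined in the context). For $i\in I$ and $s_i\in S_i$ let $\overline{f_{i,s_i}}\in G$ be the element whose $i$-th coordinate is the function $\overline{s_i}:\prod_{j\in A(i)}G_j\to G_i$ taking the value $s_i$ at $(1_{G_j})_{j\in A(i)}$ and the value $1_{G_i}$ elsewhere, and whose $q$-th coordinate, for every $q\neq i$, is the constant function with value $1_{G_q}$. Let $S=\{\overline{f_{i,s_i}}: i\in I,\ s_i\in S_i\}$. Then $S$ generates $G$, and the generalized wreath product graph $\mathcal{G}$ of the graphs $\{\mathcal{G}_i\}_{i\in I}$ (defined in the context) is the Cayley graph $Cay(G,S)$: its vertex set is the underlying set of $G$, and two vertices $f,h$ are adjacent in $\mathcal{G}$ if and only if $h=f\sigma$ for some $\sigma\in S$.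
   Context: Cayley graph: for a group $H$ with finite symmetric generating set $T$, $1_H\notin T$, $Cay(H,T)$ has vertex set $H$ and $g\sim g'$ iff $gt=g'$ for some $t\in T$. Generalized wreath product of groups: let $X=\prod_{i\in I}G_i$; for $J\subseteq I$ write $x_J=(x_j)_{j\in J}$. An element $f=(f_i)_{i\in I}\in G=\prod_i F_i$ acts on the right on $X$ by $xf=y$ with $y_i=x_i\cdot f_i(x_{A(i)})$ for each $i$ (product in $G_i$). This action is faithful, and $G$ is the permutation group so obtained, with product $fh$ meaning "first $f$, then $h$", i.e. $x(fh)=(xf)h$; explicitly $(fh)_i(z)=f_i(z)\cdot h_i\big((z_j f_j(z_{A(j)}))_{j\in A(i)}\big)$ for $z\in\prod_{j\in A(i)}G_j$ (note $A(j)\subseteq A(i)$ for $j\in A(i)$). Generalized wreath product of the graphs $\mathcal{G}_i=Cay(G_i,S_i)$: the graph $\mathcal{G}$ has vertex set $\{(f_1,\ldots,f_n): f_i\in F_i\}$. For such a vertex $f$, define elements $e_j(f)\in G_j$ recursively (by induction along $\preceq$, starting from indices $j$ with $A(j)=\emptyset$) by $e_j(f)=f_j\big((e_k(f)^{-1})_{k\in A(j)}\big)$. Vertices $f$ and $h$ are adjacent iff there exists $i\in I$ such that (1) $f_j=h_j$ for every $j\neq i$; and (2) letting $p_i(f)=(e_k(f)^{-1})_{k\in A(i)}$, $f_i(z)=h_i(z)$ for all $z\neq p_i(f)$, and $f_i(p_i(f))$ and $h_i(p_i(f))$ are adjacent in $\mathcal{G}_i$. *)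

theory Defs
  imports "HOL-Algebra.Generated_Groups"
begin

text \<open>Index poset: a finite type 'i with a partial order.  Groups: a family
  Gs :: 'i => 'g monoid of HOL-Algebra groups.  Tuples in prod_{j in A(i)} G_j are
  extensional functions on A(i).\<close>

definition up_set :: "'i::order \<Rightarrow> 'i set" where
  "up_set i = {j. i < j}"

definition args :: "('i::order \<Rightarrow> 'g monoid) \<Rightarrow> 'i \<Rightarrow> ('i \<Rightarrow> 'g) set" where
  "args Gs i = (\<Pi>\<^sub>E j\<in>up_set i. carrier (Gs j))"

definition Fset :: "('i::order \<Rightarrow> 'g monoid) \<Rightarrow> 'i \<Rightarrow> (('i \<Rightarrow> 'g) \<Rightarrow> 'g) set" where
  "Fset Gs i = (args Gs i \<rightarrow>\<^sub>E carrier (Gs i))"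

definition gw_carrier :: "('i::order \<Rightarrow> 'g monoid) \<Rightarrow> ('i \<Rightarrow> ('i \<Rightarrow> 'g) \<Rightarrow> 'g) set" where
  "gw_carrier Gs = {f. \<forall>i. f i \<in> Fset Gs i}"

text \<open>Product fh = first f, then h:
  (fh)_i(z) = f_i(z) * h_i((z_j f_j(z_{A(j)}))_{j in A(i)}).\<close>
definition gw_mult :: "('i::order \<Rightarrow> 'g monoid) \<Rightarrow> ('i \<Rightarrow> ('i \<Rightarrow> 'g) \<Rightarrow> 'g)
    \<Rightarrow> ('i \<Rightarrow> ('i \<Rightarrow> 'g) \<Rightarrow> 'g) \<Rightarrow> ('i \<Rightarrow> ('i \<Rightarrow> 'g) \<Rightarrow> 'g)" where
  "gw_mult Gs f h = (\<lambda>i. \<lambda>z\<in>args Gs i.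
      f i z \<otimes>\<^bsub>Gs i\<^esub> h i (\<lambda>j\<in>up_set i. z j \<otimes>\<^bsub>Gs j\<^esub> f j (restrict z (up_set j))))"

definition gw_one :: "('i::order \<Rightarrow> 'g monoid) \<Rightarrow> ('i \<Rightarrow> ('i \<Rightarrow> 'g) \<Rightarrow> 'g)" where
  "gw_one Gs = (\<lambda>i. \<lambda>z\<in>args Gs i. \<one>\<^bsub>Gs i\<^esub>)"

definition gen_wreath :: "('i::order \<Rightarrow> 'g monoid) \<Rightarrow> ('i \<Rightarrow> ('i \<Rightarrow> 'g) \<Rightarrow> 'g) monoid" where
  "gen_wreath Gs = \<lparr>carrier = gw_carrier Gs, mult = gw_mult Gs, one = gw_one Gs\<rparr>"

definition fbar :: "('i::order \<Rightarrow> 'g monoid) \<Rightarrow> 'i \<Rightarrow> 'g \<Rightarrow> ('i \<Rightarrow> ('i \<Rightarrow> 'g) \<Rightarrow> 'g)" where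
  "fbar Gs i s = (\<lambda>q. if q = i
      then (\<lambda>z\<in>args Gs i. if z = (\<lambda>j\<in>up_set i. \<one>\<^bsub>Gs j\<^esub>) then s else \<one>\<^bsub>Gs i\<^esub>)
      else (\<lambda>z\<in>args Gs q. \<one>\<^bsub>Gs q\<^esub>))"

definition gw_gens :: "('i::order \<Rightarrow> 'g monoid) \<Rightarrow> ('i \<Rightarrow> 'g set) \<Rightarrow> ('i \<Rightarrow> ('i \<Rightarrow> 'g) \<Rightarrow> 'g) set" where
  "gw_gens Gs S = {fbar Gs i s | i s. s \<in> S i}"

definition cayley_adj :: "('a, 'b) monoid_scheme \<Rightarrow> 'a set \<Rightarrow> 'a \<Rightarrow> 'a \<Rightarrow> bool" where
  "cayley_adj H T g g' \<longleftrightarrow> g \<in> carrier H \<and> g' \<in> carrier H \<and> (\<exists>t\<in>T. g \<otimes>\<^bsub>H\<^esub> t = g')"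

definition e_vals :: "('i::{finite,order} \<Rightarrow> 'g monoid) \<Rightarrow> ('i \<Rightarrow> ('i \<Rightarrow> 'g) \<Rightarrow> 'g) \<Rightarrow> 'i \<Rightarrow> 'g" where
  "e_vals Gs f = wfrec {(k, j). j < k}
      (\<lambda>rec j. f j (\<lambda>k\<in>up_set j. inv\<^bsub>Gs k\<^esub> (rec k)))"

definition p_pt :: "('i::{finite,order} \<Rightarrow> 'g monoid) \<Rightarrow> ('i \<Rightarrow> ('i \<Rightarrow> 'g) \<Rightarrow> 'g) \<Rightarrow> 'i \<Rightarrow> ('i \<Rightarrow> 'g)" where
  "p_pt Gs f i = (\<lambda>k\<in>up_set i. inv\<^bsub>Gs k\<^esub> (e_vals Gs f k))"

definition gw_graph_vertices :: "('i::{finite,order} \<Rightarrow> 'g monoid) \<Rightarrow> ('i \<Rightarrow> ('i \<Rightarrow> 'g) \<Rightarrow> 'g) set" where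
  "gw_graph_vertices Gs = {f. \<forall>i. f i \<in> Fset Gs i}"

definition gw_graph_adj :: "('i::{finite,order} \<Rightarrow> 'g monoid) \<Rightarrow> ('i \<Rightarrow> 'g set)
    \<Rightarrow> ('i \<Rightarrow> ('i \<Rightarrow> 'g) \<Rightarrow> 'g) \<Rightarrow> ('i \<Rightarrow> ('i \<Rightarrow> 'g) \<Rightarrow> 'g) \<Rightarrow> bool" where
  "gw_graph_adj Gs S f h \<longleftrightarrow>
     f \<in> gw_graph_vertices Gs \<and> h \<in> gw_graph_vertices Gs \<and>
     (\<exists>i. (\<forall>j. j \<noteq> i \<longrightarrow> f j = h j) \<and>
          (\<forall>z\<in>args Gs i. z \<noteq> p_pt Gs f i \<longrightarrow> f i z = h i z) \<and>
          cayley_adj (Gs i) (S i) (f i (p_pt Gs f i)) (h i (p_pt Gs f i)))"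

end

theory Submission
  imports Defs
begin

text \<open>
  Right multiplication by \<open>fbar Gs i s\<close> changes f only in the value \<open>f i z\<close> at the
  unique tuple z that the action of f sends to the all-ones tuple on A(i). Solving
  z_j * f_j(z restricted to A(j)) = 1 from the top of the poset downwards gives
  \<open>z = p_pt Gs f i\<close>, which is exactly the adjacency of the wreath product graph.

  For generation, conjugating by elements that are constant in every coordinate moves
  the point at which a generator \<open>fbar Gs i s\<close> acts from the all-ones tuple to an
  arbitrary one; so each element changing one value in coordinate i is generated once
  the constants above i are. Products of these give every element supported in one
  coordinate, and splitting off maximal coordinates of the support gives all of G,
  again by induction downwards along the order.
\<close>

definition gw_action :: "('i::order \<Rightarrow> 'g monoid) \<Rightarrow> ('i \<Rightarrow> ('i \<Rightarrow> 'g) \<Rightarrow> 'g)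
    \<Rightarrow> ('i \<Rightarrow> 'g) \<Rightarrow> ('i \<Rightarrow> 'g)" where
  "gw_action Gs f z = (\<lambda>j. z j \<otimes>\<^bsub>Gs j\<^esub> f j (restrict z (up_set j)))"

lemma up_set_trans: "j \<in> up_set i \<Longrightarrow> up_set j \<subseteq> up_set i"
  by (auto simp: up_set_def)

lemma up_set_irrefl [simp]: "i \<notin> up_set i"
  by (auto simp: up_set_def)

lemma wf_greater: "wf {(k::'i::{finite,order}, j). j < k}"
proof (rule finite_acyclic_wf)
  have "trans {(k::'i, j). j < k}" by (auto simp: trans_def)
  then show "acyclic {(k::'i, j). j < k}"
    unfolding acyclic_irrefl trancl_id by (auto simp: irrefl_def)
qed simp

lemma gw_mult_eq:
  "z \<in> args Gs i \<Longrightarrow>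
    gw_mult Gs f h i z = f i z \<otimes>\<^bsub>Gs i\<^esub> h i (restrict (gw_action Gs f z) (up_set i))"
  by (simp add: gw_mult_def gw_action_def restrict_def)

lemma gw_mult_undefined: "z \<notin> args Gs i \<Longrightarrow> gw_mult Gs f h i z = undefined"
  by (simp add: gw_mult_def)

lemma gw_action_restrict:
  "k \<in> up_set j \<Longrightarrow> gw_action Gs f (restrict z (up_set j)) k = gw_action Gs f z k"
  using up_set_trans[of k j] by (simp add: gw_action_def Int_absorb1)

lemma (in monoid) generate_subset_carrier_Units:
  "H \<subseteq> Units G \<Longrightarrow> generate G H \<subseteq> carrier G"
proof
  fix x assume "x \<in> generate G H" and H: "H \<subseteq> Units G"
  then show "x \<in> carrier G"
    by (induction x rule: generate.induct) (auto intro: Units_closed Units_inv_closed)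
qed

locale group_family =
  fixes Gs :: "'i::{finite,order} \<Rightarrow> 'g monoid"
  assumes group_Gs: "\<And>i. group (Gs i)"
begin

lemma monoid_Gs: "monoid (Gs i)"
  using group_Gs by (rule group.is_monoid)

lemmas Gs_m_assoc = monoid.m_assoc[OF monoid_Gs]
lemmas Gs_m_closed = monoid.m_closed[OF monoid_Gs]
lemmas Gs_one_closed = monoid.one_closed[OF monoid_Gs]
lemmas Gs_l_one = monoid.l_one[OF monoid_Gs]
lemmas Gs_r_one = monoid.r_one[OF monoid_Gs]
lemmas Gs_inv_closed = group.inv_closed[OF group_Gs]
lemmas Gs_l_inv = group.l_inv[OF group_Gs]
lemmas Gs_r_inv = group.r_inv[OF group_Gs]

lemma args_restrict:
  "z \<in> args Gs i \<Longrightarrow> j \<in> up_set i \<Longrightarrow> restrict z (up_set j) \<in> args Gs j"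
  using up_set_trans[of j i] by (auto simp: args_def)

lemma args_in_carrier: "z \<in> args Gs i \<Longrightarrow> j \<in> up_set i \<Longrightarrow> z j \<in> carrier (Gs j)"
  by (auto simp: args_def)

lemma gw_carrier_apply: "f \<in> gw_carrier Gs \<Longrightarrow> z \<in> args Gs i \<Longrightarrow> f i z \<in> carrier (Gs i)"
  by (auto simp: gw_carrier_def Fset_def)

lemma gw_carrier_undefined: "f \<in> gw_carrier Gs \<Longrightarrow> z \<notin> args Gs i \<Longrightarrow> f i z = undefined"
  by (auto simp: gw_carrier_def Fset_def)

lemma gw_action_args:
  "f \<in> gw_carrier Gs \<Longrightarrow> z \<in> args Gs i \<Longrightarrow> restrict (gw_action Gs f z) (up_set i) \<in> args Gs i"
  using args_restrict args_in_carrier gw_carrier_apply Gs_m_closed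
  by (auto simp: gw_action_def args_def)

lemma gw_action_trivial_above:
  assumes "\<And>j. j \<in> up_set i \<Longrightarrow> f j = gw_one Gs j" and z: "z \<in> args Gs i"
  shows "restrict (gw_action Gs f z) (up_set i) = z"
proof
  fix j
  show "restrict (gw_action Gs f z) (up_set i) j = z j"
    using assms args_restrict[OF z, of j] args_in_carrier[OF z, of j] z
    by (auto simp: gw_action_def gw_one_def Gs_r_one args_def)
qed

subsection \<open>The generalized wreath product is a monoid\<close>

lemma gw_mult_closed:
  "f \<in> gw_carrier Gs \<Longrightarrow> h \<in> gw_carrier Gs \<Longrightarrow> gw_mult Gs f h \<in> gw_carrier Gs"
  using gw_action_args gw_carrier_apply Gs_m_closed
  by (auto simp: gw_mult_eq gw_mult_undefined gw_carrier_def Fset_def)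

lemma gw_one_closed: "gw_one Gs \<in> gw_carrier Gs"
  by (auto simp: gw_carrier_def Fset_def gw_one_def Gs_one_closed)

lemma gw_one_apply: "z \<in> args Gs i \<Longrightarrow> gw_one Gs i z = \<one>\<^bsub>Gs i\<^esub>"
  by (simp add: gw_one_def)

lemma gw_l_one: "f \<in> gw_carrier Gs \<Longrightarrow> gw_mult Gs (gw_one Gs) f = f"
  by (intro ext, rename_tac i z, case_tac "z \<in> args Gs i")
    (auto simp: gw_mult_eq gw_mult_undefined gw_carrier_undefined gw_action_trivial_above
      Gs_l_one gw_carrier_apply gw_one_apply)

lemma gw_r_one: "f \<in> gw_carrier Gs \<Longrightarrow> gw_mult Gs f (gw_one Gs) = f"
  by (intro ext, rename_tac i z, case_tac "z \<in> args Gs i")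
    (auto simp: gw_mult_eq gw_mult_undefined gw_carrier_undefined gw_action_args
      Gs_r_one gw_carrier_apply gw_one_apply)

lemma gw_action_mult:
  assumes f: "f \<in> gw_carrier Gs" and h: "h \<in> gw_carrier Gs"
    and z: "z \<in> args Gs i" and j: "j \<in> up_set i"
  shows "gw_action Gs (gw_mult Gs f h) z j = gw_action Gs h (restrict (gw_action Gs f z) (up_set i)) j"
proof -
  have zj: "restrict z (up_set j) \<in> args Gs j" using args_restrict z j .
  have restrict_fz: "restrict (gw_action Gs f (restrict z (up_set j))) (up_set j)
      = restrict (gw_action Gs f z) (up_set j)"
    by (rule restrict_ext) (simp add: gw_action_restrict)
  have "gw_action Gs (gw_mult Gs f h) z j = z j \<otimes>\<^bsub>Gs j\<^esub> (f j (restrict z (up_set j)) \<otimes>\<^bsub>Gs j\<^esub>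
      h j (restrict (gw_action Gs f (restrict z (up_set j))) (up_set j)))"
    by (simp add: gw_action_def gw_mult_eq[OF zj])
  also have "\<dots> = (z j \<otimes>\<^bsub>Gs j\<^esub> f j (restrict z (up_set j))) \<otimes>\<^bsub>Gs j\<^esub>
      h j (restrict (gw_action Gs f z) (up_set j))"
    using Gs_m_assoc args_in_carrier[OF z j] gw_carrier_apply[OF f zj]
      gw_carrier_apply[OF h gw_action_args[OF f zj]]
    by (simp add: restrict_fz)
  also have "\<dots> = gw_action Gs h (restrict (gw_action Gs f z) (up_set i)) j"
    using j up_set_trans[OF j] by (simp add: gw_action_def Int_absorb1 Int_absorb2)
  finally show ?thesis .
qed

lemma gw_mult_assoc:
  assumes f: "f \<in> gw_carrier Gs" and h: "h \<in> gw_carrier Gs" and k: "k \<in> gw_carrier Gs"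
  shows "gw_mult Gs (gw_mult Gs f h) k = gw_mult Gs f (gw_mult Gs h k)"
proof (intro ext)
  fix i z
  show "gw_mult Gs (gw_mult Gs f h) k i z = gw_mult Gs f (gw_mult Gs h k) i z"
  proof (cases "z \<in> args Gs i")
    case False
    then show ?thesis by (simp add: gw_mult_undefined)
  next
    case z: True
    define w where "w = restrict (gw_action Gs f z) (up_set i)"
    have w: "w \<in> args Gs i" using gw_action_args[OF f z] by (simp add: w_def)
    have action_fh: "restrict (gw_action Gs (gw_mult Gs f h) z) (up_set i)
        = restrict (gw_action Gs h w) (up_set i)"
      by (rule restrict_ext) (simp add: gw_action_mult[OF f h z] w_def)
    have "gw_mult Gs (gw_mult Gs f h) k i z
        = (f i z \<otimes>\<^bsub>Gs i\<^esub> h i w) \<otimes>\<^bsub>Gs i\<^esub> k i (restrict (gw_action Gs h w) (up_set i))"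
      by (simp add: gw_mult_eq[OF z] action_fh w_def)
    also have "\<dots> = f i z \<otimes>\<^bsub>Gs i\<^esub> gw_mult Gs h k i w"
      using Gs_m_assoc gw_carrier_apply[OF f z] gw_carrier_apply[OF h w]
        gw_carrier_apply[OF k gw_action_args[OF h w]]
      by (simp add: gw_mult_eq[OF w])
    also have "\<dots> = gw_mult Gs f (gw_mult Gs h k) i z"
      by (simp add: gw_mult_eq[OF z] w_def)
    finally show ?thesis .
  qed
qed

lemma monoid_gen_wreath: "monoid (gen_wreath Gs)"
  by (rule monoidI)
    (auto simp: gen_wreath_def gw_mult_closed gw_one_closed gw_mult_assoc gw_l_one gw_r_one)

lemma gw_mult_generate:
  "a \<in> generate (gen_wreath Gs) H \<Longrightarrow> b \<in> generate (gen_wreath Gs) H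
    \<Longrightarrow> gw_mult Gs a b \<in> generate (gen_wreath Gs) H"
  using generate.eng[of a "gen_wreath Gs" H b] by (simp add: gen_wreath_def)

lemma gw_one_generate: "gw_one Gs \<in> generate (gen_wreath Gs) H"
  using generate.one[of "gen_wreath Gs" H] by (simp add: gen_wreath_def)

subsection \<open>Elements supported in one coordinate\<close>

definition gw_single :: "'i \<Rightarrow> (('i \<Rightarrow> 'g) \<Rightarrow> 'g) \<Rightarrow> ('i \<Rightarrow> ('i \<Rightarrow> 'g) \<Rightarrow> 'g)" where
  "gw_single m \<phi> = (gw_one Gs)(m := \<phi>)"

definition gw_delta :: "'i \<Rightarrow> ('i \<Rightarrow> 'g) \<Rightarrow> 'g \<Rightarrow> ('i \<Rightarrow> ('i \<Rightarrow> 'g) \<Rightarrow> 'g)" where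
  "gw_delta m w g = gw_single m (\<lambda>v\<in>args Gs m. if v = w then g else \<one>\<^bsub>Gs m\<^esub>)"

definition one_tuple :: "'i \<Rightarrow> ('i \<Rightarrow> 'g)" where
  "one_tuple m = (\<lambda>j\<in>up_set m. \<one>\<^bsub>Gs j\<^esub>)"

definition gw_const :: "('i \<Rightarrow> 'g) \<Rightarrow> ('i \<Rightarrow> ('i \<Rightarrow> 'g) \<Rightarrow> 'g)" where
  "gw_const c = (\<lambda>q. \<lambda>v\<in>args Gs q. c q)"

lemma one_tuple_args: "one_tuple m \<in> args Gs m"
  by (simp add: one_tuple_def args_def Gs_one_closed)

lemma fbar_eq_gw_delta: "fbar Gs i s = gw_delta i (one_tuple i) s"
  by (rule ext) (simp add: fbar_def gw_delta_def gw_single_def gw_one_def one_tuple_def)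

lemma gw_single_closed: "\<phi> \<in> Fset Gs m \<Longrightarrow> gw_single m \<phi> \<in> gw_carrier Gs"
  using gw_one_closed by (auto simp: gw_single_def gw_carrier_def)

lemma gw_delta_closed: "g \<in> carrier (Gs m) \<Longrightarrow> gw_delta m w g \<in> gw_carrier Gs"
  unfolding gw_delta_def by (rule gw_single_closed) (auto simp: Fset_def Gs_one_closed)

lemma gw_delta_apply:
  "v \<in> args Gs q \<Longrightarrow>
    gw_delta m w g q v = (if q = m \<and> v = w then g else \<one>\<^bsub>Gs q\<^esub>)"
  by (auto simp: gw_delta_def gw_single_def gw_one_def)

lemma gw_delta_undefined: "v \<notin> args Gs q \<Longrightarrow> gw_delta m w g q v = undefined"
  by (auto simp: gw_delta_def gw_single_def gw_one_def)

lemma gw_delta_one: "gw_delta m w \<one>\<^bsub>Gs m\<^esub> = gw_one Gs"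
  by (rule ext) (simp add: gw_delta_def gw_single_def gw_one_def)

lemma gw_const_closed: "(\<And>q. c q \<in> carrier (Gs q)) \<Longrightarrow> gw_const c \<in> gw_carrier Gs"
  by (auto simp: gw_const_def gw_carrier_def Fset_def)

lemma gw_mult_single:
  assumes f: "f \<in> gw_carrier Gs" and \<phi>: "\<phi> \<in> Fset Gs m"
    and above: "\<And>j. j \<in> up_set m \<Longrightarrow> f j = gw_one Gs j"
  shows "gw_mult Gs f (gw_single m \<phi>) = f(m := (\<lambda>z\<in>args Gs m. f m z \<otimes>\<^bsub>Gs m\<^esub> \<phi> z))"
proof (intro ext)
  fix q z
  show "gw_mult Gs f (gw_single m \<phi>) q z = (f(m := (\<lambda>z\<in>args Gs m. f m z \<otimes>\<^bsub>Gs m\<^esub> \<phi> z))) q z"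
  proof (cases "z \<in> args Gs q")
    case False
    then show ?thesis by (auto simp: gw_mult_undefined gw_carrier_undefined[OF f])
  next
    case z: True
    show ?thesis
    proof (cases "q = m")
      case True
      then show ?thesis
        using z by (simp add: gw_mult_eq gw_single_def gw_action_trivial_above[OF above])
    next
      case False
      then show ?thesis
        using z gw_action_args[OF f z] gw_carrier_apply[OF f z]
        by (simp add: gw_mult_eq gw_single_def gw_one_apply Gs_r_one)
    qed
  qed
qed

lemma gw_single_mult:
  assumes "\<phi> \<in> Fset Gs m" and "\<psi> \<in> Fset Gs m"
  shows "gw_mult Gs (gw_single m \<phi>) (gw_single m \<psi>)
    = gw_single m (\<lambda>v\<in>args Gs m. \<phi> v \<otimes>\<^bsub>Gs m\<^esub> \<psi> v)"
proof -
  have "\<And>j. j \<in> up_set m \<Longrightarrow> gw_single m \<phi> j = gw_one Gs j"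
    by (auto simp: gw_single_def)
  from gw_mult_single[OF gw_single_closed[OF assms(1)] assms(2) this]
  have "gw_mult Gs (gw_single m \<phi>) (gw_single m \<psi>)
      = (gw_single m \<phi>)(m := \<lambda>v\<in>args Gs m. \<phi> v \<otimes>\<^bsub>Gs m\<^esub> \<psi> v)"
    by (simp only: gw_single_def fun_upd_same)
  then show ?thesis by (simp only: gw_single_def fun_upd_upd)
qed

lemma gw_delta_mult:
  assumes "g \<in> carrier (Gs m)" and "g' \<in> carrier (Gs m)"
  shows "gw_mult Gs (gw_delta m w g) (gw_delta m w g') = gw_delta m w (g \<otimes>\<^bsub>Gs m\<^esub> g')"
  unfolding gw_delta_def using assms
  by (subst gw_single_mult) (auto simp: Fset_def Gs_one_closed Gs_l_one Gs_r_one
      intro!: arg_cong[where f = "gw_single m"])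

lemma gw_delta_Units:
  assumes g: "g \<in> carrier (Gs m)"
  shows "gw_delta m w g \<in> Units (gen_wreath Gs)"
proof -
  have g': "inv\<^bsub>Gs m\<^esub> g \<in> carrier (Gs m)" using Gs_inv_closed[OF g] .
  show ?thesis
    unfolding Units_def
    using gw_delta_mult[OF g g'] gw_delta_mult[OF g' g] gw_delta_closed[OF g] gw_delta_closed[OF g']
    by (auto simp: gen_wreath_def Gs_l_inv[OF g] Gs_r_inv[OF g] gw_delta_one
        intro!: bexI[where x = "gw_delta m w (inv\<^bsub>Gs m\<^esub> g)"])
qed

lemma generate_gw_gens_subset_carrier:
  assumes "\<And>i. S i \<subseteq> carrier (Gs i)"
  shows "generate (gen_wreath Gs) (gw_gens Gs S) \<subseteq> carrier (gen_wreath Gs)"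
  using assms
  by (intro monoid.generate_subset_carrier_Units[OF monoid_gen_wreath])
    (auto simp: gw_gens_def fbar_eq_gw_delta intro!: gw_delta_Units)

subsection \<open>Generation\<close>

lemma gw_delta_one_tuple_generate:
  assumes sub: "S m \<subseteq> carrier (Gs m)" and symm: "\<And>s. s \<in> S m \<Longrightarrow> inv\<^bsub>Gs m\<^esub> s \<in> S m"
    and g: "g \<in> generate (Gs m) (S m)"
  shows "gw_delta m (one_tuple m) g \<in> generate (gen_wreath Gs) (gw_gens Gs S)"
  using g
proof (induction g rule: generate.induct)
  case one
  then show ?case by (simp add: gw_delta_one gw_one_generate)
next
  case (incl h)
  then show ?case by (auto simp: gw_gens_def fbar_eq_gw_delta intro!: generate.incl)
next
  case (inv h)
  then show ?case using symm by (auto simp: gw_gens_def fbar_eq_gw_delta intro!: generate.incl)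
next
  case (eng h1 h2)
  have "h1 \<in> carrier (Gs m)" "h2 \<in> carrier (Gs m)"
    using group.generate_in_carrier[OF group_Gs sub] eng.hyps by auto
  then show ?case using gw_mult_generate[OF eng.IH] gw_delta_mult by simp
qed

lemma gw_single_generate:
  assumes fin: "finite (args Gs m)"
    and deltas: "\<And>w g. w \<in> args Gs m \<Longrightarrow> g \<in> carrier (Gs m)
      \<Longrightarrow> gw_delta m w g \<in> generate (gen_wreath Gs) H"
    and \<phi>: "\<phi> \<in> Fset Gs m"
  shows "gw_single m \<phi> \<in> generate (gen_wreath Gs) H"
proof -
  have \<phi>_carrier: "\<And>v. v \<in> args Gs m \<Longrightarrow> \<phi> v \<in> carrier (Gs m)"
    using \<phi> by (auto simp: Fset_def)
  define \<phi>_on where "\<phi>_on W = (\<lambda>v\<in>args Gs m. if v \<in> W then \<phi> v else \<one>\<^bsub>Gs m\<^esub>)" for W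
  have "gw_single m (\<phi>_on W) \<in> generate (gen_wreath Gs) H" if "finite W" "W \<subseteq> args Gs m" for W
    using that
  proof (induction W rule: finite_induct)
    case empty
    have "gw_single m (\<phi>_on {}) = gw_one Gs"
      by (rule ext) (simp add: gw_single_def gw_one_def \<phi>_on_def)
    then show ?case using gw_one_generate by simp
  next
    case (insert w W)
    have w: "w \<in> args Gs m" using insert by auto
    have "gw_single m (\<phi>_on (insert w W)) = gw_mult Gs (gw_single m (\<phi>_on W)) (gw_delta m w (\<phi> w))"
      unfolding gw_delta_def using insert.hyps(2)
      by (subst gw_single_mult)
        (auto simp: Fset_def Gs_one_closed Gs_l_one Gs_r_one \<phi>_carrier \<phi>_on_def
          intro!: arg_cong[where f = "gw_single m"])
    then show ?case
      using insert w by (simp add: gw_mult_generate deltas \<phi>_carrier)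
  qed
  moreover have "\<phi>_on (args Gs m) = \<phi>"
    using \<phi> by (auto simp: Fset_def \<phi>_on_def fun_eq_iff)
  ultimately show ?thesis using fin by force
qed

text \<open>Peel off a maximal coordinate of the support: the remaining factor is trivial
  above it, so \<open>gw_mult_single\<close> applies.\<close>

lemma gw_generate_if_singles_generate:
  assumes "\<And>j \<phi>. j \<in> T \<Longrightarrow> \<phi> \<in> Fset Gs j \<Longrightarrow> gw_single j \<phi> \<in> generate (gen_wreath Gs) H"
    and "f \<in> gw_carrier Gs" and "\<And>q. q \<notin> T \<Longrightarrow> f q = gw_one Gs q"
  shows "f \<in> generate (gen_wreath Gs) H"
  using finite[of T] assms
proof (induction T arbitrary: f rule: finite_psubset_induct)
  case (psubset T)
  note singles = psubset.prems(1) and f = psubset.prems(2) and outside = psubset.prems(3)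
  show ?case
  proof (cases "T = {}")
    case True
    then have "f = gw_one Gs" using outside by auto
    then show ?thesis using gw_one_generate by simp
  next
    case False
    obtain m where m: "m \<in> T" and maximal: "\<And>b. b \<in> T \<Longrightarrow> m \<le> b \<Longrightarrow> m = b"
      using finite_has_maximal[OF psubset.hyps False] by blast
    define f' where "f' = f(m := gw_one Gs m)"
    have f': "f' \<in> gw_carrier Gs"
      using f gw_one_closed by (auto simp: f'_def gw_carrier_def)
    have fm: "f m \<in> Fset Gs m" using f by (auto simp: gw_carrier_def)
    have above: "f' j = gw_one Gs j" if "j \<in> up_set m" for j
      using that maximal outside[of j] by (force simp: f'_def up_set_def)
    have "gw_mult Gs f' (gw_single m (f m))
        = f'(m := \<lambda>z\<in>args Gs m. f' m z \<otimes>\<^bsub>Gs m\<^esub> f m z)"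
      using gw_mult_single[OF f' fm above] .
    also have "(\<lambda>z\<in>args Gs m. f' m z \<otimes>\<^bsub>Gs m\<^esub> f m z) = f m"
      using fm gw_carrier_apply[OF f]
      by (auto simp: f'_def gw_one_apply Gs_l_one Fset_def fun_eq_iff)
    also have "f'(m := f m) = f"
      by (simp add: f'_def)
    finally have "gw_mult Gs f' (gw_single m (f m)) = f" .
    moreover have "f' \<in> generate (gen_wreath Gs) H"
    proof (rule psubset.IH)
      show "T - {m} \<subset> T" using m by auto
      show "f' q = gw_one Gs q" if "q \<notin> T - {m}" for q
        using that outside by (auto simp: f'_def)
    qed (use singles f' in auto)
    ultimately show ?thesis
      using gw_mult_generate singles[OF m fm] by metis
  qed
qed

text \<open>The constant elements translate tuples coordinatewise, so conjugation by them moves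
  the point \<open>one_tuple m\<close> of a delta element to any given tuple \<open>z\<close>.\<close>

lemma gw_delta_conj:
  assumes z: "z \<in> args Gs m" and g: "g \<in> carrier (Gs m)"
  defines "c \<equiv> (\<lambda>q. if q \<in> up_set m then inv\<^bsub>Gs q\<^esub> z q else \<one>\<^bsub>Gs q\<^esub>)"
    and "c' \<equiv> (\<lambda>q. if q \<in> up_set m then z q else \<one>\<^bsub>Gs q\<^esub>)"
  shows "gw_delta m z g = gw_mult Gs (gw_mult Gs (gw_const c) (gw_delta m (one_tuple m) g)) (gw_const c')"
proof (intro ext)
  fix q v
  have c: "\<And>q. c q \<in> carrier (Gs q)" and c': "\<And>q. c' q \<in> carrier (Gs q)"
    using args_in_carrier[OF z] by (auto simp: c_def c'_def Gs_inv_closed Gs_one_closed)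
  have cd: "gw_mult Gs (gw_const c) (gw_delta m (one_tuple m) g) \<in> gw_carrier Gs"
    using gw_mult_closed gw_const_closed[OF c] gw_delta_closed[OF g] by blast
  show "gw_delta m z g q v
      = gw_mult Gs (gw_mult Gs (gw_const c) (gw_delta m (one_tuple m) g)) (gw_const c') q v"
  proof (cases "v \<in> args Gs q")
    case False
    then show ?thesis by (simp add: gw_delta_undefined gw_mult_undefined)
  next
    case v: True
    define v' where "v' = restrict (gw_action Gs (gw_const c) v) (up_set q)"
    have v': "v' \<in> args Gs q" using gw_action_args[OF gw_const_closed[OF c] v] by (simp add: v'_def)
    have rhs: "gw_mult Gs (gw_mult Gs (gw_const c) (gw_delta m (one_tuple m) g)) (gw_const c') q v
       = (c q \<otimes>\<^bsub>Gs q\<^esub> gw_delta m (one_tuple m) g q v') \<otimes>\<^bsub>Gs q\<^esub> c' q"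
      using gw_action_args[OF cd v] v by (simp add: gw_mult_eq[OF v] gw_const_def v'_def)
    show ?thesis
    proof (cases "q = m")
      case True
      have "v' = one_tuple m \<longleftrightarrow> (\<forall>j\<in>up_set m. v j \<otimes>\<^bsub>Gs j\<^esub> inv\<^bsub>Gs j\<^esub> z j = \<one>\<^bsub>Gs j\<^esub>)"
        using v True args_restrict[OF v]
        by (auto simp: fun_eq_iff one_tuple_def gw_action_def gw_const_def c_def restrict_def v'_def)
      also have "\<dots> \<longleftrightarrow> (\<forall>j\<in>up_set m. v j = z j)"
        using args_in_carrier v z True group.inv_equality[OF group_Gs] Gs_r_inv
        by (metis (no_types, lifting) Gs_inv_closed group.inv_inv[OF group_Gs])
      also have "\<dots> \<longleftrightarrow> v = z"
        using v z True by (auto simp: args_def fun_eq_iff PiE_def extensional_def)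
      finally have "v' = one_tuple m \<longleftrightarrow> v = z" .
      moreover have "c m = \<one>\<^bsub>Gs m\<^esub>" "c' m = \<one>\<^bsub>Gs m\<^esub>" by (auto simp: c_def c'_def)
      ultimately show ?thesis
        using True rhs v' v g by (simp add: gw_delta_apply Gs_l_one Gs_r_one Gs_one_closed)
    next
      case False
      have "c q \<otimes>\<^bsub>Gs q\<^esub> c' q = \<one>\<^bsub>Gs q\<^esub>"
        using args_in_carrier[OF z] by (auto simp: c_def c'_def Gs_l_inv Gs_one_closed Gs_l_one)
      then show ?thesis using False rhs v' v c by (simp add: gw_delta_apply Gs_r_one)
    qed
  qed
qed

lemma finite_args: "(\<And>i. finite (carrier (Gs i))) \<Longrightarrow> finite (args Gs m)"
  unfolding args_def by (auto intro!: finite_PiE)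

lemma gw_delta_generate:
  assumes fin: "\<And>i. finite (carrier (Gs i))"
    and sub: "\<And>i. S i \<subseteq> carrier (Gs i)"
    and symm: "\<And>i s. s \<in> S i \<Longrightarrow> inv\<^bsub>Gs i\<^esub> s \<in> S i"
    and gen: "\<And>i. generate (Gs i) (S i) = carrier (Gs i)"
  shows "z \<in> args Gs m \<Longrightarrow> g \<in> carrier (Gs m)
    \<Longrightarrow> gw_delta m z g \<in> generate (gen_wreath Gs) (gw_gens Gs S)"
proof (induction m arbitrary: z g rule: wf_induct_rule[OF wf_greater])
  case (1 m)
  have singles: "gw_single j \<phi> \<in> generate (gen_wreath Gs) (gw_gens Gs S)"
    if "j \<in> up_set m" "\<phi> \<in> Fset Gs j" for j \<phi>
    using that 1 gw_single_generate[OF finite_args[OF fin]] by (auto simp: up_set_def)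
  have const: "gw_const c \<in> generate (gen_wreath Gs) (gw_gens Gs S)"
    if "\<And>q. c q \<in> carrier (Gs q)" "\<And>q. q \<notin> up_set m \<Longrightarrow> c q = \<one>\<^bsub>Gs q\<^esub>" for c
    using that
    by (intro gw_generate_if_singles_generate[OF singles] gw_const_closed)
      (auto simp: gw_const_def gw_one_def)
  have "gw_delta m (one_tuple m) g \<in> generate (gen_wreath Gs) (gw_gens Gs S)"
    using gw_delta_one_tuple_generate[of S m, OF sub symm] 1 gen by blast
  then show ?case
    unfolding gw_delta_conj[OF 1(2,3)]
    using args_in_carrier[OF 1(2)]
    by (intro gw_mult_generate const) (auto simp: Gs_inv_closed Gs_one_closed)
qed

lemma gw_carrier_subset_generate:
  assumes "\<And>i. finite (carrier (Gs i))"
    and "\<And>i. S i \<subseteq> carrier (Gs i)"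
    and "\<And>i s. s \<in> S i \<Longrightarrow> inv\<^bsub>Gs i\<^esub> s \<in> S i"
    and "\<And>i. generate (Gs i) (S i) = carrier (Gs i)"
  shows "carrier (gen_wreath Gs) \<subseteq> generate (gen_wreath Gs) (gw_gens Gs S)"
  using gw_generate_if_singles_generate[where T = UNIV]
    gw_single_generate[OF finite_args gw_delta_generate] assms
  by (auto simp: gen_wreath_def)

subsection \<open>The Cayley graph\<close>

lemma e_vals_unfold: "e_vals Gs f j = f j (p_pt Gs f j)"
proof -
  have "e_vals Gs f j = f j (\<lambda>k\<in>up_set j. inv\<^bsub>Gs k\<^esub>
      (cut (e_vals Gs f) {(k, j). j < k} j k))"
    unfolding e_vals_def by (subst wfrec[OF wf_greater]) simp
  also have "\<dots> = f j (p_pt Gs f j)"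
    unfolding p_pt_def by (rule arg_cong[where f = "f j"]) (auto simp: cut_apply up_set_def)
  finally show ?thesis .
qed

lemma e_vals_closed: "f \<in> gw_carrier Gs \<Longrightarrow> e_vals Gs f j \<in> carrier (Gs j)"
proof (induction j rule: wf_induct_rule[OF wf_greater])
  case (1 j)
  then have "p_pt Gs f j \<in> args Gs j"
    by (auto simp: p_pt_def args_def up_set_def Gs_inv_closed)
  then show ?case using gw_carrier_apply[OF 1(2)] e_vals_unfold by simp
qed

lemma p_pt_args: "f \<in> gw_carrier Gs \<Longrightarrow> p_pt Gs f i \<in> args Gs i"
  by (auto simp: p_pt_def args_def e_vals_closed Gs_inv_closed)

lemma p_pt_restrict: "j \<in> up_set i \<Longrightarrow> restrict (p_pt Gs f i) (up_set j) = p_pt Gs f j"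
  using up_set_trans[of j i] by (auto simp: p_pt_def fun_eq_iff)

lemma gw_action_eq_one_tuple_iff:
  assumes f: "f \<in> gw_carrier Gs" and z: "z \<in> args Gs i"
  shows "restrict (gw_action Gs f z) (up_set i) = one_tuple i \<longleftrightarrow> z = p_pt Gs f i"
proof
  assume one: "restrict (gw_action Gs f z) (up_set i) = one_tuple i"
  have "j \<in> up_set i \<longrightarrow> z j = inv\<^bsub>Gs j\<^esub> e_vals Gs f j" for j
  proof (induction j rule: wf_induct_rule[OF wf_greater])
    case (1 j)
    show ?case
    proof
      assume j: "j \<in> up_set i"
      have "restrict z (up_set j) = p_pt Gs f j"
        using 1 up_set_trans[OF j] by (auto simp: p_pt_def up_set_def fun_eq_iff)
      then have "z j \<otimes>\<^bsub>Gs j\<^esub> e_vals Gs f j = \<one>\<^bsub>Gs j\<^esub>"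
        using fun_cong[OF one, of j] j by (simp add: gw_action_def one_tuple_def e_vals_unfold)
      then show "z j = inv\<^bsub>Gs j\<^esub> e_vals Gs f j"
        using group.inv_equality[OF group_Gs] args_in_carrier[OF z j] e_vals_closed[OF f] by metis
    qed
  qed
  then show "z = p_pt Gs f i" using z by (auto simp: fun_eq_iff p_pt_def args_def)
next
  assume z_eq: "z = p_pt Gs f i"
  show "restrict (gw_action Gs f z) (up_set i) = one_tuple i"
  proof
    fix j
    show "restrict (gw_action Gs f z) (up_set i) j = one_tuple i j"
    proof (cases "j \<in> up_set i")
      case True
      then have "gw_action Gs f z j = inv\<^bsub>Gs j\<^esub> e_vals Gs f j \<otimes>\<^bsub>Gs j\<^esub> e_vals Gs f j"
        by (simp add: gw_action_def z_eq p_pt_restrict e_vals_unfold[symmetric]) (simp add: p_pt_def)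
      then show ?thesis using True e_vals_closed[OF f] by (simp add: Gs_l_inv one_tuple_def)
    qed (simp add: one_tuple_def)
  qed
qed

lemma gw_mult_fbar_apply:
  assumes f: "f \<in> gw_carrier Gs" and s: "s \<in> carrier (Gs i)" and v: "v \<in> args Gs q"
  shows "gw_mult Gs f (fbar Gs i s) q v
    = (if q = i \<and> v = p_pt Gs f i then f q v \<otimes>\<^bsub>Gs q\<^esub> s else f q v)"
  using gw_action_args[OF f v] gw_action_eq_one_tuple_iff[OF f v] gw_carrier_apply[OF f v]
  by (auto simp: gw_mult_eq[OF v] fbar_eq_gw_delta gw_delta_apply Gs_r_one)

lemma gw_graph_adj_iff_cayley_adj:
  assumes sub: "\<And>i. S i \<subseteq> carrier (Gs i)"
  shows "gw_graph_adj Gs S f h \<longleftrightarrow> cayley_adj (gen_wreath Gs) (gw_gens Gs S) f h"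
proof
  assume adj: "gw_graph_adj Gs S f h"
  then have f: "f \<in> gw_carrier Gs" and h: "h \<in> gw_carrier Gs"
    by (auto simp: gw_graph_adj_def gw_graph_vertices_def gw_carrier_def)
  from adj obtain i t where others: "\<forall>j. j \<noteq> i \<longrightarrow> f j = h j"
    and off_p: "\<forall>z\<in>args Gs i. z \<noteq> p_pt Gs f i \<longrightarrow> f i z = h i z"
    and t: "t \<in> S i" and at_p: "f i (p_pt Gs f i) \<otimes>\<^bsub>Gs i\<^esub> t = h i (p_pt Gs f i)"
    by (auto simp: gw_graph_adj_def cayley_adj_def)
  have t_carrier: "t \<in> carrier (Gs i)" using t sub by auto
  have "gw_mult Gs f (fbar Gs i t) = h"
  proof (intro ext)
    fix q v
    show "gw_mult Gs f (fbar Gs i t) q v = h q v"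
    proof (cases "v \<in> args Gs q")
      case True
      then show ?thesis using gw_mult_fbar_apply[OF f t_carrier True] others off_p at_p by auto
    qed (simp add: gw_mult_undefined gw_carrier_undefined[OF h])
  qed
  then show "cayley_adj (gen_wreath Gs) (gw_gens Gs S) f h"
    using f h t by (auto simp: cayley_adj_def gen_wreath_def gw_gens_def)
next
  assume "cayley_adj (gen_wreath Gs) (gw_gens Gs S) f h"
  then obtain i s where f: "f \<in> gw_carrier Gs" and h: "h \<in> gw_carrier Gs" and s: "s \<in> S i"
    and h_eq: "h = gw_mult Gs f (fbar Gs i s)"
    by (auto simp: cayley_adj_def gen_wreath_def gw_gens_def)
  have s_carrier: "s \<in> carrier (Gs i)" using s sub by auto
  have p: "p_pt Gs f i \<in> args Gs i" using p_pt_args[OF f] .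
  have "f j = h j" if "j \<noteq> i" for j
  proof
    fix v
    show "f j v = h j v"
      using that gw_mult_fbar_apply[OF f s_carrier, of v j] gw_carrier_undefined[OF f, of v j]
      by (cases "v \<in> args Gs j") (simp_all add: h_eq gw_mult_undefined)
  qed
  moreover have "cayley_adj (Gs i) (S i) (f i (p_pt Gs f i)) (h i (p_pt Gs f i))"
    using gw_mult_fbar_apply[OF f s_carrier p] h_eq gw_carrier_apply[OF f p]
      gw_carrier_apply[OF h p] s
    by (auto simp: cayley_adj_def)
  ultimately show "gw_graph_adj Gs S f h"
    using f h gw_mult_fbar_apply[OF f s_carrier] h_eq
    by (auto simp: gw_graph_adj_def gw_graph_vertices_def gw_carrier_def)
qed

end

theorem theorem3p14:
  fixes Gs :: "'i::{finite,order} \<Rightarrow> 'g monoid"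
    and S :: "'i \<Rightarrow> 'g set"
  assumes grp: "\<And>i. group (Gs i)"
    and fin: "\<And>i. finite (carrier (Gs i))"
    and sub: "\<And>i. S i \<subseteq> carrier (Gs i)"
    and symm: "\<And>i s. s \<in> S i \<Longrightarrow> inv\<^bsub>Gs i\<^esub> s \<in> S i"
    and no1: "\<And>i. \<one>\<^bsub>Gs i\<^esub> \<notin> S i"
    and gen: "\<And>i. generate (Gs i) (S i) = carrier (Gs i)"
  shows "generate (gen_wreath Gs) (gw_gens Gs S) = carrier (gen_wreath Gs)
     \<and> gw_graph_vertices Gs = carrier (gen_wreath Gs)
     \<and> (\<forall>f h. gw_graph_adj Gs S f h \<longleftrightarrow> cayley_adj (gen_wreath Gs) (gw_gens Gs S) f h)"
proof -
  interpret group_family Gs by (rule group_family.intro) (rule grp)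
  have "generate (gen_wreath Gs) (gw_gens Gs S) = carrier (gen_wreath Gs)"
    using generate_gw_gens_subset_carrier[OF sub] gw_carrier_subset_generate[OF fin sub symm gen]
    by (rule antisym)
  moreover have "gw_graph_vertices Gs = carrier (gen_wreath Gs)"
    by (simp add: gen_wreath_def gw_graph_vertices_def gw_carrier_def)
  ultimately show ?thesis using gw_graph_adj_iff_cayley_adj[OF sub] by blast
qed

end
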